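(* Let $I\subset S$ be a nonzero proper graded ideal. Then $$\lim_{k\to\infty}\frac{\mathrm{v}(I^k)}{k}=\alpha(I).$$
   Context: $S=K[x_1,\dots,x_n]$ is a standard graded polynomial ring over a field $K$, $S_d$ its degree-$d$ component. For a graded ideal $I\subset S$, the v-number of $I$ is $\mathrm{v}(I)=\min\{d:\exists f\in S_d\text{ with }(I:f)\in\operatorname{Ass}(I)\}$. For a nonzero graded module $M=\bigoplus_d M_d$, $\alpha(M)=\min\{d:M_d\neq0\}$ is its initial degree; $\alpha(I)$ is the least degree of a nonzero element of $I$. *)

theory Defs
  imports "HOL-Analysis.Analysis" "HOL-Library.Poly_Mapping"
begin

text \<open>The polynomial ring S = K[x_v : v in 'v] over a field K, with a finite type 'v of
  variables (so n = CARD('v)).\<close>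

type_synonym ('v, 'k) mpoly = "('v \<Rightarrow>\<^sub>0 nat) \<Rightarrow>\<^sub>0 'k"

definition mdeg :: "('v::finite \<Rightarrow>\<^sub>0 nat) \<Rightarrow> nat" where
  "mdeg m = (\<Sum>v\<in>UNIV. Poly_Mapping.lookup m v)"

text \<open>f lies in S_d (the zero polynomial lies in every S_d).\<close>
definition homog :: "nat \<Rightarrow> ('v::finite, 'k::field) mpoly \<Rightarrow> bool" where
  "homog d f \<longleftrightarrow> (\<forall>m\<in>Poly_Mapping.keys f. mdeg m = d)"

definition is_ideal :: "('v::finite, 'k::field) mpoly set \<Rightarrow> bool" where
  "is_ideal I \<longleftrightarrow> 0 \<in> I \<and> (\<forall>f\<in>I. \<forall>g\<in>I. f + g \<in> I) \<and> (\<forall>f\<in>I. \<forall>h. h * f \<in> I)"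

definition ideal_gen :: "('v::finite, 'k::field) mpoly set \<Rightarrow> ('v, 'k) mpoly set" where
  "ideal_gen G = \<Inter>{J. is_ideal J \<and> G \<subseteq> J}"

definition graded_ideal :: "('v::finite, 'k::field) mpoly set \<Rightarrow> bool" where
  "graded_ideal I \<longleftrightarrow> is_ideal I \<and> I = ideal_gen {f\<in>I. \<exists>d. homog d f}"

fun ideal_pow :: "('v::finite, 'k::field) mpoly set \<Rightarrow> nat \<Rightarrow> ('v, 'k) mpoly set" where
  "ideal_pow I 0 = UNIV"
| "ideal_pow I (Suc k) = ideal_gen {f * g | f g. f \<in> I \<and> g \<in> ideal_pow I k}"

definition colon :: "('v::finite, 'k::field) mpoly set \<Rightarrow> ('v, 'k) mpoly \<Rightarrow> ('v, 'k) mpoly set" where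
  "colon I f = {g. g * f \<in> I}"

definition prime_ideal :: "('v::finite, 'k::field) mpoly set \<Rightarrow> bool" where
  "prime_ideal P \<longleftrightarrow> is_ideal P \<and> P \<noteq> UNIV \<and> (\<forall>a b. a * b \<in> P \<longrightarrow> a \<in> P \<or> b \<in> P)"

definition Ass :: "('v::finite, 'k::field) mpoly set \<Rightarrow> ('v, 'k) mpoly set set" where
  "Ass I = {P. prime_ideal P \<and> (\<exists>f. P = colon I f)}"

definition v_number :: "('v::finite, 'k::field) mpoly set \<Rightarrow> nat" where
  "v_number I = (LEAST d. \<exists>f. homog d f \<and> colon I f \<in> Ass I)"

definition init_deg :: "('v::finite, 'k::field) mpoly set \<Rightarrow> nat" where
  "init_deg I = (LEAST d. \<exists>f\<in>I. f \<noteq> 0 \<and> homog d f)"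

end

theory Submission
  imports Defs "HOL-Library.List_Lexorder"
begin

text \<open>Let \<open>g \<in> I\<close> be homogeneous of degree \<open>\<alpha>(I)\<close>. If \<open>(I\<^sup>k : f)\<close> is prime it contains
  \<open>g\<close>, because it contains \<open>g\<^sup>k \<in> I\<^sup>k\<close>; so \<open>g f \<in> I\<^sup>k\<close> has degree at least \<open>k \<alpha>(I)\<close> and
  \<open>v(I\<^sup>k) \<ge> (k - 1) \<alpha>(I)\<close>. Conversely the ascending chain \<open>(I\<^sup>n\<^sup>+\<^sup>1 : g\<^sup>n)\<close> stabilises by
  Noetherianity, and a homogeneous associated prime \<open>(C : r)\<close> of its limit \<open>C\<close> equals
  \<open>(I\<^sup>n\<^sup>+\<^sup>1 : g\<^sup>n r)\<close> for all large \<open>n\<close>, whence \<open>v(I\<^sup>n\<^sup>+\<^sup>1) \<le> n \<alpha>(I) + deg r\<close>. Noetherianity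
  is proved with leading monomials for a lexicographic order and Dickson's lemma.\<close>

abbreviation keys :: "('a \<Rightarrow>\<^sub>0 'b::zero) \<Rightarrow> 'a set" where
  "keys \<equiv> Poly_Mapping.keys"

abbreviation lookup :: "('a \<Rightarrow>\<^sub>0 'b::zero) \<Rightarrow> 'a \<Rightarrow> 'b" where
  "lookup \<equiv> Poly_Mapping.lookup"

section \<open>Ideals, powers and colon ideals\<close>

lemma ideal_zero_mem: "is_ideal J \<Longrightarrow> 0 \<in> J"
  unfolding is_ideal_def by auto

lemma ideal_add_mem: "is_ideal J \<Longrightarrow> f \<in> J \<Longrightarrow> g \<in> J \<Longrightarrow> f + g \<in> J"
  unfolding is_ideal_def by auto

lemma ideal_mult_left_mem: "is_ideal J \<Longrightarrow> f \<in> J \<Longrightarrow> h * f \<in> J"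
  unfolding is_ideal_def by auto

lemma ideal_mult_right_mem: "is_ideal J \<Longrightarrow> f \<in> J \<Longrightarrow> f * h \<in> J"
  using ideal_mult_left_mem[of J f h] by (simp add: mult.commute)

lemma ideal_diff_mem: "is_ideal J \<Longrightarrow> f \<in> J \<Longrightarrow> g \<in> J \<Longrightarrow> f - g \<in> J"
  using ideal_add_mem[of J f "-1 * g"] ideal_mult_left_mem[of J g "-1"] by simp

lemma ideal_sum_mem: "is_ideal J \<Longrightarrow> (\<And>i. i \<in> A \<Longrightarrow> f i \<in> J) \<Longrightarrow> sum f A \<in> J"
  by (induction A rule: infinite_finite_induct) (auto simp: ideal_zero_mem ideal_add_mem)

lemma ideal_eq_UNIV_iff_one_mem: "is_ideal J \<Longrightarrow> J = UNIV \<longleftrightarrow> 1 \<in> J"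
  using ideal_mult_left_mem[of J 1] by auto

lemma is_ideal_UNIV: "is_ideal UNIV"
  unfolding is_ideal_def by auto

lemma is_ideal_zero: "is_ideal {0}"
  unfolding is_ideal_def by simp

lemma is_ideal_ideal_gen: "is_ideal (ideal_gen G)"
  unfolding ideal_gen_def is_ideal_def by auto

lemma ideal_gen_superset: "G \<subseteq> ideal_gen G"
  unfolding ideal_gen_def by auto

lemma ideal_gen_minimal: "is_ideal J \<Longrightarrow> G \<subseteq> J \<Longrightarrow> ideal_gen G \<subseteq> J"
  unfolding ideal_gen_def by auto

lemma is_ideal_ideal_pow: "is_ideal (ideal_pow I k)"
  by (cases k) (auto simp: is_ideal_UNIV is_ideal_ideal_gen)

lemma mult_mem_ideal_pow: "f \<in> I \<Longrightarrow> g \<in> ideal_pow I k \<Longrightarrow> f * g \<in> ideal_pow I (Suc k)"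
  using ideal_gen_superset by fastforce

lemma power_mem_ideal_pow: "f \<in> I \<Longrightarrow> f ^ k \<in> ideal_pow I k"
proof (induction k)
  case (Suc k)
  then show ?case using mult_mem_ideal_pow[of f I "f ^ k" k] by simp
qed simp

lemma is_ideal_colon: "is_ideal J \<Longrightarrow> is_ideal (colon J f)"
  unfolding colon_def is_ideal_def by (auto simp: distrib_right mult.assoc)

lemma colon_colon: "colon (colon J a) b = colon J (a * b)"
  unfolding colon_def by (auto simp: ac_simps)

lemma ideal_subset_colon: "is_ideal J \<Longrightarrow> J \<subseteq> colon J f"
  unfolding colon_def using ideal_mult_right_mem by blast

lemma colon_zero: "is_ideal J \<Longrightarrow> colon J 0 = UNIV"
  unfolding colon_def using ideal_zero_mem by auto

lemma one_not_mem_prime_ideal: "prime_ideal P \<Longrightarrow> 1 \<notin> P"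
  unfolding prime_ideal_def using ideal_eq_UNIV_iff_one_mem by blast

lemma prime_ideal_power_mem: "prime_ideal P \<Longrightarrow> x ^ k \<in> P \<Longrightarrow> x \<in> P"
  by (induction k) (auto simp: one_not_mem_prime_ideal, auto simp: prime_ideal_def)

lemma v_number_le: "homog d f \<Longrightarrow> colon J f \<in> Ass J \<Longrightarrow> v_number J \<le> d"
  unfolding v_number_def by (rule Least_le) blast

lemma v_number_attained:
  "homog d f \<Longrightarrow> colon J f \<in> Ass J \<Longrightarrow> \<exists>g. homog (v_number J) g \<and> colon J g \<in> Ass J"
  unfolding v_number_def by (rule LeastI) blast

section \<open>Degrees and the monomial order\<close>

lemma mdeg_add: "mdeg (a + b) = mdeg a + mdeg b"
  unfolding mdeg_def by (simp add: lookup_add sum.distrib)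

lemma mdeg_eq_0_iff: "mdeg (m :: 'v::finite \<Rightarrow>\<^sub>0 nat) = 0 \<longleftrightarrow> m = 0"
  unfolding mdeg_def by (auto intro: poly_mapping_eqI)

lemma homog_mult: "homog d f \<Longrightarrow> homog e g \<Longrightarrow> homog (d + e) (f * g)"
  unfolding homog_def using keys_mult[of f g] by (force simp: mdeg_add)

lemma homog_one: "homog 0 (1 :: ('v::finite, 'k::field) mpoly)"
  unfolding homog_def by (simp add: mdeg_eq_0_iff)

lemma homog_power: "homog d f \<Longrightarrow> homog (k * d) (f ^ k)"
  by (induction k) (auto simp: homog_one dest: homog_mult)

lemma homog_0_eq_const: "homog 0 f \<Longrightarrow> f = Poly_Mapping.single 0 (lookup f 0)"
  unfolding homog_def
  by (intro poly_mapping_eqI) (auto simp: lookup_single when_def mdeg_eq_0_iff in_keys_iff)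

text \<open>Lexicographic order on exponent vectors, read off along a fixed enumeration of the
  variables.\<close>

definition var_list :: "'v::finite list" where
  "var_list = (SOME xs. set xs = UNIV)"

lemma set_var_list: "set (var_list :: 'v::finite list) = UNIV"
  unfolding var_list_def by (rule someI_ex) (simp add: finite_list)

definition exps :: "('v::finite \<Rightarrow>\<^sub>0 nat) \<Rightarrow> nat list" where
  "exps m = map (lookup m) var_list"

lemma exps_eq_iff: "exps a = exps b \<longleftrightarrow> a = b"
  unfolding exps_def by (auto simp: map_eq_conv set_var_list intro: poly_mapping_eqI)

lemma length_exps [simp]: "length (exps (m :: 'v::finite \<Rightarrow>\<^sub>0 nat)) = length (var_list :: 'v list)"
  unfolding exps_def by simp

lemma nth_exps_add:
  "i < length (var_list :: 'v::finite list) \<Longrightarrow> exps (a + b) ! i = exps a ! i + exps (b :: 'v \<Rightarrow>\<^sub>0 nat) ! i"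
  unfolding exps_def by (simp add: lookup_add)

lemma take_exps_add_eq_iff:
  "take i (exps (a + c)) = take i (exps (b + c)) \<longleftrightarrow> take i (exps a) = take i (exps (b :: 'v::finite \<Rightarrow>\<^sub>0 nat))"
  by (simp add: list_eq_iff_nth_eq nth_exps_add)

lemma exps_add_less: "exps a < exps b \<Longrightarrow> exps (a + c) < exps (b + (c :: 'v::finite \<Rightarrow>\<^sub>0 nat))"
  unfolding list_less_def lexord_take_index_conv by (auto simp: take_exps_add_eq_iff nth_exps_add)

lemma exps_add_le: "exps a \<le> exps b \<Longrightarrow> exps (a + c) \<le> exps (b + (c :: 'v::finite \<Rightarrow>\<^sub>0 nat))"
  using exps_add_less[of a b c] by (auto simp: order_le_less exps_eq_iff)

lemma wf_exps_less: "wf {(a, b). exps a < exps (b :: 'v::finite \<Rightarrow>\<^sub>0 nat)}"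
proof (rule wf_subset)
  show "wf (inv_image (lex {(u :: nat, v). u < v}) exps)"
    by (intro wf_inv_image wf_lex) (simp add: wf_less)
  show "{(a, b). exps a < exps (b :: 'v \<Rightarrow>\<^sub>0 nat)} \<subseteq> inv_image (lex {(u, v). u < v}) exps"
    by (auto simp: list_less_def lexord_lex)
qed

definition lead_mon :: "('v::finite, 'k::field) mpoly \<Rightarrow> ('v \<Rightarrow>\<^sub>0 nat)" where
  "lead_mon f = inv_into (keys f) exps (Max (exps ` keys f))"

lemma lead_mon_in_keys: "f \<noteq> 0 \<Longrightarrow> lead_mon f \<in> keys f"
  unfolding lead_mon_def by (intro inv_into_into) (auto intro!: Max_in)

lemma lookup_lead_mon_nonzero: "f \<noteq> 0 \<Longrightarrow> lookup f (lead_mon f) \<noteq> 0"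
  using lead_mon_in_keys in_keys_iff by blast

lemma exps_lead_mon: "f \<noteq> 0 \<Longrightarrow> exps (lead_mon f) = Max (exps ` keys f)"
  unfolding lead_mon_def by (intro f_inv_into_f) (auto intro!: Max_in)

lemma exps_le_lead_mon: "m \<in> keys f \<Longrightarrow> exps m \<le> exps (lead_mon f)"
  by (subst exps_lead_mon) auto

lemma lead_mon_eqI: "m \<in> keys f \<Longrightarrow> (\<And>m'. m' \<in> keys f \<Longrightarrow> exps m' \<le> exps m) \<Longrightarrow> lead_mon f = m"
  by (metis antisym empty_iff keys_zero lead_mon_in_keys exps_le_lead_mon exps_eq_iff)

lemma exps_add_le_lead_mon:
  "a \<in> keys f \<Longrightarrow> b \<in> keys g \<Longrightarrow> exps (a + b) \<le> exps (lead_mon f + lead_mon g)"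
  using exps_add_le[OF exps_le_lead_mon[of a f], of b] exps_add_le[OF exps_le_lead_mon[of b g], of "lead_mon f"]
  by (simp add: add.commute)

lemma lead_mon_add_unique:
  assumes "a \<in> keys f" "b \<in> keys g" "a + b = lead_mon f + lead_mon g"
  shows "a = lead_mon f \<and> b = lead_mon g"
proof -
  have "exps a = exps (lead_mon f)"
  proof (rule ccontr)
    assume "exps a \<noteq> exps (lead_mon f)"
    with exps_le_lead_mon[OF assms(1)] have "exps (a + b) < exps (lead_mon f + b)"
      by (simp add: exps_add_less)
    also have "\<dots> \<le> exps (lead_mon f + lead_mon g)"
      using exps_add_le[OF exps_le_lead_mon[OF assms(2)], of "lead_mon f"] by (simp add: add.commute)
    finally show False using assms(3) by simp
  qed
  with assms(3) show ?thesis by (simp add: exps_eq_iff)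
qed

lemma lookup_mult_lead_mon:
  fixes f g :: "('v::finite, 'k::field) mpoly"
  assumes "f \<noteq> 0" "g \<noteq> 0"
  shows "lookup (f * g) (lead_mon f + lead_mon g) = lookup f (lead_mon f) * lookup g (lead_mon g)"
proof -
  let ?q = "lead_mon f + lead_mon g"
  have "lookup (f * g) ?q = (\<Sum>(a, b). lookup f a * lookup g b when ?q = a + b)"
    by (simp add: times_poly_mapping.rep_eq prod_fun_unfold_prod)
  also have "\<dots> = (\<Sum>ab. (case ab of (a, b) \<Rightarrow> lookup f a * lookup g b) when (lead_mon f, lead_mon g) = ab)"
  proof (rule Sum_any.cong, clarify)
    fix a b
    show "(lookup f a * lookup g b when ?q = a + b) =
        (lookup f a * lookup g b when (lead_mon f, lead_mon g) = (a, b))"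
      using lead_mon_add_unique[of a f b g] by (cases "lookup f a * lookup g b = 0") (auto simp: when_def in_keys_iff)
  qed
  also have "\<dots> = lookup f (lead_mon f) * lookup g (lead_mon g)" by simp
  finally show ?thesis .
qed

lemma mult_nonzero: "f \<noteq> 0 \<Longrightarrow> g \<noteq> 0 \<Longrightarrow> f * (g :: ('v::finite, 'k::field) mpoly) \<noteq> 0"
  using lookup_mult_lead_mon[of f g] lookup_lead_mon_nonzero[of f] lookup_lead_mon_nonzero[of g] by auto

lemma power_nonzero: "f \<noteq> 0 \<Longrightarrow> f ^ k \<noteq> (0 :: ('v::finite, 'k::field) mpoly)"
  by (induction k) (auto simp: mult_nonzero)

lemma lead_mon_mult:
  fixes f g :: "('v::finite, 'k::field) mpoly"
  assumes "f \<noteq> 0" "g \<noteq> 0"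
  shows "lead_mon (f * g) = lead_mon f + lead_mon g"
proof (rule lead_mon_eqI)
  show "lead_mon f + lead_mon g \<in> keys (f * g)"
    using lookup_mult_lead_mon[OF assms] lookup_lead_mon_nonzero[OF assms(1)] lookup_lead_mon_nonzero[OF assms(2)]
    by (simp add: in_keys_iff)
  fix m assume "m \<in> keys (f * g)"
  then obtain a b where "m = a + b" "a \<in> keys f" "b \<in> keys g" using keys_mult by blast
  then show "exps m \<le> exps (lead_mon f + lead_mon g)" using exps_add_le_lead_mon by blast
qed

lemma lead_mon_single: "c \<noteq> 0 \<Longrightarrow> lead_mon (Poly_Mapping.single a c :: ('v::finite, 'k::field) mpoly) = a"
  by (rule lead_mon_eqI) auto

section \<open>Noetherianity\<close>

lemma nat_seq_mono_subseq:
  fixes x :: "nat \<Rightarrow> nat"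
  shows "\<exists>t :: nat \<Rightarrow> nat. strict_mono t \<and> mono (\<lambda>n. x (t n))"
proof -
  obtain t :: "nat \<Rightarrow> nat" where t: "strict_mono t" "monoseq (\<lambda>n. x (t n))"
    using seq_monosub by blast
  consider "\<forall>m. \<forall>n\<ge>m. x (t m) \<le> x (t n)" | "\<forall>m. \<forall>n\<ge>m. x (t n) \<le> x (t m)"
    using t(2) unfolding monoseq_def by blast
  then show ?thesis
  proof cases
    case 1
    then have "strict_mono t \<and> mono (\<lambda>n. x (t n))" using t(1) by (auto intro: monoI)
    then show ?thesis by blast
  next
    case 2
    define N where "N = (ARG_MIN (\<lambda>n. x (t n)) n. True)"
    have "x (t (N + n)) = x (t N)" for n
      using 2 arg_min_nat_le[of "\<lambda>_. True" "N + n" "\<lambda>n. x (t n)"] unfolding N_def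
      by (simp add: antisym)
    then have "strict_mono (\<lambda>n. t (N + n)) \<and> mono (\<lambda>n. x (t (N + n)))"
      using t(1) by (simp add: strict_mono_def mono_def)
    then show ?thesis by blast
  qed
qed

lemma mono_subseq_on_finite:
  fixes m :: "nat \<Rightarrow> ('v \<Rightarrow>\<^sub>0 nat)"
  assumes "finite V"
  shows "\<exists>s :: nat \<Rightarrow> nat. strict_mono s \<and> (\<forall>v\<in>V. mono (\<lambda>n. lookup (m (s n)) v))"
  using assms
proof (induction V rule: finite_induct)
  case empty
  show ?case by (rule exI[of _ id]) (simp add: strict_mono_def)
next
  case (insert v V)
  then obtain s :: "nat \<Rightarrow> nat" where s: "strict_mono s" "\<forall>w\<in>V. mono (\<lambda>n. lookup (m (s n)) w)"
    by blast
  obtain t :: "nat \<Rightarrow> nat" where t: "strict_mono t" "mono (\<lambda>n. lookup (m (s (t n))) v)"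
    using nat_seq_mono_subseq[of "\<lambda>n. lookup (m (s n)) v"] by blast
  have "mono (\<lambda>n. lookup (m (s (t n))) w)" if "w \<in> V" for w
    using s(2) that strict_mono_mono[OF t(1)] by (simp add: mono_def)
  then have "strict_mono (\<lambda>n. s (t n)) \<and> (\<forall>w\<in>insert v V. mono (\<lambda>n. lookup (m (s (t n))) w))"
    using s(1) t by (simp add: strict_mono_def)
  then show ?case by blast
qed

definition mon_dvd :: "('v \<Rightarrow>\<^sub>0 nat) \<Rightarrow> ('v \<Rightarrow>\<^sub>0 nat) \<Rightarrow> bool" where
  "mon_dvd a b \<longleftrightarrow> (\<forall>v. lookup a v \<le> lookup b v)"

lemma mon_dvd_add_diff: "mon_dvd a b \<Longrightarrow> b = a + (b - a)"
  unfolding mon_dvd_def by (intro poly_mapping_eqI) (simp add: lookup_add lookup_minus)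

lemma dickson: "\<exists>i j. i < j \<and> mon_dvd (m i) (m j)" for m :: "nat \<Rightarrow> ('v::finite \<Rightarrow>\<^sub>0 nat)"
proof -
  obtain s :: "nat \<Rightarrow> nat" where s: "strict_mono s" "\<forall>v. mono (\<lambda>n. lookup (m (s n)) v)"
    using mono_subseq_on_finite[of UNIV m] by auto
  then have "s 0 < s 1" "mon_dvd (m (s 0)) (m (s 1))"
    by (auto simp: strict_mono_def mon_dvd_def mono_def)
  then show ?thesis by blast
qed

lemma upward_closed_chain_stabilizes:
  fixes L :: "nat \<Rightarrow> ('v::finite \<Rightarrow>\<^sub>0 nat) set"
  assumes inc: "\<And>n. L n \<subseteq> L (Suc n)" and up: "\<And>n a b. a \<in> L n \<Longrightarrow> mon_dvd a b \<Longrightarrow> b \<in> L n"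
  shows "\<exists>N. \<forall>n\<ge>N. L n = L N"
proof (rule ccontr)
  assume "\<not> ?thesis"
  then obtain ns where ns: "\<And>i. ns i \<le> ns (Suc i) \<and> L (ns (Suc i)) \<noteq> L (ns i)"
    using dependent_nat_choice[of "\<lambda>_ _. True" "\<lambda>_ a b. a \<le> b \<and> L b \<noteq> L a"] by metis
  have L_mono: "a \<le> b \<Longrightarrow> L a \<subseteq> L b" for a b
    by (rule lift_Suc_mono_le[of L, OF inc])
  have "\<exists>x. x \<in> L (ns (Suc i)) \<and> x \<notin> L (ns i)" for i
    using ns[of i] L_mono[of "ns i" "ns (Suc i)"] by auto
  then obtain m where m: "\<And>i. m i \<in> L (ns (Suc i))" "\<And>i. m i \<notin> L (ns i)" by metis
  obtain i j where ij: "i < j" "mon_dvd (m i) (m j)" using dickson[of m] by blast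
  have "ns (Suc i) \<le> ns j"
    using ij(1) lift_Suc_mono_le[of ns "Suc i" j] ns by simp
  then have "m i \<in> L (ns j)" using m(1) L_mono by blast
  then show False using up ij(2) m(2) by blast
qed

definition lead_mons :: "('v::finite, 'k::field) mpoly set \<Rightarrow> ('v \<Rightarrow>\<^sub>0 nat) set" where
  "lead_mons A = lead_mon ` (A - {0})"

lemma lead_mons_upward_closed:
  fixes A :: "('v::finite, 'k::field) mpoly set"
  assumes "is_ideal A" "a \<in> lead_mons A" "mon_dvd a b"
  shows "b \<in> lead_mons A"
proof -
  obtain f where f: "f \<in> A" "f \<noteq> 0" "lead_mon f = a" using assms(2) unfolding lead_mons_def by auto
  define u :: "('v, 'k) mpoly" where "u = Poly_Mapping.single (b - a) 1"
  have u: "u \<noteq> 0" "lead_mon u = b - a"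
    unfolding u_def by (metis lookup_single_eq one_neq_zero lookup_zero) (simp add: lead_mon_single)
  have "u * f \<in> A - {0}" using ideal_mult_left_mem[OF assms(1) f(1)] mult_nonzero[OF u(1) f(2)] by simp
  moreover have "lead_mon (u * f) = b"
    using lead_mon_mult[OF u(1) f(2)] u(2) f(3) mon_dvd_add_diff[OF assms(3)] by (simp add: add.commute)
  ultimately show ?thesis unfolding lead_mons_def by force
qed

lemma lookup_const_mult: "lookup (Poly_Mapping.single 0 c * h) x = c * lookup h x"
  by (simp add: mult_map_scale_conv_mult[symmetric] Poly_Mapping.map.rep_eq when_def)

text \<open>Cancel the leading term of \<open>f \<in> B\<close> by an element of \<open>A\<close> with the same leading
  monomial and induct on the leading monomial.\<close>

lemma ideal_eq_if_lead_mons_eq: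
  fixes A B :: "('v::finite, 'k::field) mpoly set"
  assumes A: "is_ideal A" and B: "is_ideal B" and "A \<subseteq> B" and lead: "lead_mons A = lead_mons B"
  shows "A = B"
proof -
  have "f \<in> A" if "f \<in> B" "f \<noteq> 0" "lead_mon f = m" for f m
    using that
  proof (induction m arbitrary: f rule: wf_induct_rule[OF wf_exps_less])
    case (1 m)
    then have "m \<in> lead_mons A" using lead unfolding lead_mons_def by auto
    then obtain h where h: "h \<in> A" "h \<noteq> 0" "lead_mon h = m" unfolding lead_mons_def by auto
    define ch where "ch = Poly_Mapping.single 0 (lookup f m / lookup h m) * h"
    define f' where "f' = f - ch"
    have ch: "ch \<in> A" unfolding ch_def using ideal_mult_left_mem[OF A h(1)] .
    have "f' \<in> A"
    proof (cases "f' = 0")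
      case False
      have "lookup h m \<noteq> 0" using lookup_lead_mon_nonzero[OF h(2)] h(3) by simp
      then have "lookup f' m = 0" by (simp add: f'_def ch_def lookup_minus lookup_const_mult)
      then have "lead_mon f' \<noteq> m" using lookup_lead_mon_nonzero[OF False] by auto
      moreover have "lead_mon f' \<in> keys f \<union> keys h"
        using lead_mon_in_keys[OF False]
        by (auto simp: f'_def ch_def in_keys_iff lookup_minus lookup_const_mult)
      ultimately have "exps (lead_mon f') < exps m"
        using exps_le_lead_mon[of "lead_mon f'" f] exps_le_lead_mon[of "lead_mon f'" h] 1(4) h(3)
        by (auto simp: order_le_less exps_eq_iff)
      moreover have "f' \<in> B" unfolding f'_def using ideal_diff_mem[OF B 1(2)] ch assms(3) by auto
      ultimately show ?thesis using 1(1) False by blast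
    qed (simp add: ideal_zero_mem[OF A])
    then have "f' + ch \<in> A" using ideal_add_mem[OF A _ ch] by blast
    then show "f \<in> A" by (simp add: f'_def)
  qed
  then show ?thesis using assms(3) ideal_zero_mem[OF A] by blast
qed

lemma ideal_chain_stabilizes:
  fixes J :: "nat \<Rightarrow> ('v::finite, 'k::field) mpoly set"
  assumes ideal: "\<And>n. is_ideal (J n)" and inc: "\<And>n. J n \<subseteq> J (Suc n)"
  shows "\<exists>N. \<forall>n\<ge>N. J n = J N"
proof -
  have "\<exists>N. \<forall>n\<ge>N. lead_mons (J n) = lead_mons (J N)"
  proof (rule upward_closed_chain_stabilizes)
    show "lead_mons (J n) \<subseteq> lead_mons (J (Suc n))" for n using inc unfolding lead_mons_def by auto
  qed (use lead_mons_upward_closed ideal in blast)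
  then obtain N where "\<forall>n\<ge>N. lead_mons (J n) = lead_mons (J N)" by blast
  then show ?thesis
    using ideal_eq_if_lead_mons_eq[OF ideal ideal lift_Suc_mono_le[of J, OF inc]] by metis
qed

lemma ideal_family_has_maximal:
  fixes F :: "('v::finite, 'k::field) mpoly set set"
  assumes "Q0 \<in> F" "\<And>J. J \<in> F \<Longrightarrow> is_ideal J"
  shows "\<exists>Q\<in>F. \<forall>J\<in>F. Q \<subseteq> J \<longrightarrow> J = Q"
proof (rule ccontr)
  assume "\<not> ?thesis"
  then have "\<And>Q. Q \<in> F \<Longrightarrow> \<exists>J. J \<in> F \<and> Q \<subset> J" by blast
  then obtain C where C: "\<And>n. C n \<in> F \<and> C n \<subset> C (Suc n)"
    using dependent_nat_choice[of "\<lambda>_ Q. Q \<in> F" "\<lambda>_ Q J. Q \<subset> J"] assms(1) by metis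
  then obtain N where "\<forall>n\<ge>N. C n = C N"
    using ideal_chain_stabilizes[of C] assms(2) by blast
  then have "C (Suc N) = C N" by (metis le_SucI order_refl)
  then show False using C[of N] by simp
qed

section \<open>Homogeneous components\<close>

definition hom_comp :: "nat \<Rightarrow> ('v::finite, 'k::field) mpoly \<Rightarrow> ('v, 'k) mpoly" where
  "hom_comp d f = (\<Sum>m\<in>{m\<in>keys f. mdeg m = d}. Poly_Mapping.single m (lookup f m))"

definition tdeg :: "('v::finite, 'k::field) mpoly \<Rightarrow> nat" where
  "tdeg f = Max (insert 0 (mdeg ` keys f))"

lemma lookup_hom_comp: "lookup (hom_comp d f) m = (if mdeg m = d then lookup f m else 0)"
proof -
  have "lookup (hom_comp d f) m = (\<Sum>a\<in>{a\<in>keys f. mdeg a = d}. if a = m then lookup f a else 0)"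
    unfolding hom_comp_def lookup_sum by (intro sum.cong) (auto simp: lookup_single when_def)
  also have "\<dots> = (if mdeg m = d then lookup f m else 0)"
    by (subst sum.delta) (auto simp: in_keys_iff)
  finally show ?thesis .
qed

lemma hom_comp_zero [simp]: "hom_comp d 0 = 0"
  by (intro poly_mapping_eqI) (simp add: lookup_hom_comp)

lemma hom_comp_add: "hom_comp d (f + g) = hom_comp d f + hom_comp d g"
  by (intro poly_mapping_eqI) (simp add: lookup_hom_comp lookup_add)

lemma hom_comp_sum: "hom_comp d (sum F A) = (\<Sum>i\<in>A. hom_comp d (F i))"
  by (induction A rule: infinite_finite_induct) (simp_all add: hom_comp_add)

lemma homog_hom_comp: "homog d (hom_comp d f)"
  unfolding homog_def by (auto simp: in_keys_iff lookup_hom_comp split: if_splits)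

lemma hom_comp_homog: "homog e f \<Longrightarrow> hom_comp d f = (if d = e then f else 0)"
  unfolding homog_def by (intro poly_mapping_eqI) (auto simp: lookup_hom_comp in_keys_iff)

lemma mdeg_le_tdeg: "m \<in> keys f \<Longrightarrow> mdeg m \<le> tdeg f"
  unfolding tdeg_def by simp

lemma hom_comp_eq_0_if_tdeg_less: "tdeg f < d \<Longrightarrow> hom_comp d f = 0"
  by (intro poly_mapping_eqI)
    (metis lookup_hom_comp in_keys_iff lookup_zero mdeg_le_tdeg leD)

lemma sum_hom_comp: "tdeg f \<le> N \<Longrightarrow> (\<Sum>d\<le>N. hom_comp d f) = f"
proof (intro poly_mapping_eqI)
  fix m assume "tdeg f \<le> N"
  then have "lookup f m \<noteq> 0 \<Longrightarrow> mdeg m \<le> N" using mdeg_le_tdeg[of m f] by (simp add: in_keys_iff)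
  then show "lookup (\<Sum>d\<le>N. hom_comp d f) m = lookup f m"
    by (auto simp: lookup_sum lookup_hom_comp)
qed

lemma hom_comp_homog_mult:
  assumes "homog e u"
  shows "hom_comp d (u * f) = (if e \<le> d then u * hom_comp (d - e) f else 0)"
proof -
  have "u * f = (\<Sum>i\<le>tdeg f. u * hom_comp i f)"
    by (simp add: sum_hom_comp sum_distrib_left[symmetric])
  then have "hom_comp d (u * f) = (\<Sum>i\<le>tdeg f. if d = e + i then u * hom_comp i f else 0)"
    by (simp add: hom_comp_sum hom_comp_homog[OF homog_mult[OF assms homog_hom_comp]])
  also have "\<dots> = (if e \<le> d then u * hom_comp (d - e) f else 0)"
  proof (cases "e \<le> d")
    case True
    then have "(\<Sum>i\<le>tdeg f. if d = e + i then u * hom_comp i f else 0) =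
        (\<Sum>i\<le>tdeg f. if i = d - e then u * hom_comp i f else 0)"
      by (intro sum.cong) auto
    then show ?thesis using True hom_comp_eq_0_if_tdeg_less[of f "d - e"] by simp
  qed simp
  finally show ?thesis .
qed

lemma hom_comp_mult:
  assumes "tdeg f \<le> N" "tdeg g \<le> M"
  shows "hom_comp d (f * g) =
    (\<Sum>i\<le>N. \<Sum>j\<le>M. if i + j = d then hom_comp i f * hom_comp j g else 0)"
proof -
  have "f * g = (\<Sum>i\<le>N. \<Sum>j\<le>M. hom_comp i f * hom_comp j g)"
    using sum_hom_comp[OF assms(1)] sum_hom_comp[OF assms(2)] by (metis sum_product)
  then show ?thesis
    by (simp add: hom_comp_sum hom_comp_homog[OF homog_mult[OF homog_hom_comp homog_hom_comp]] eq_commute)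
qed

definition hom_closed :: "('v::finite, 'k::field) mpoly set \<Rightarrow> bool" where
  "hom_closed J \<longleftrightarrow> (\<forall>f\<in>J. \<forall>d. hom_comp d f \<in> J)"

lemma is_ideal_hom_closed_part:
  assumes G: "is_ideal G"
  shows "is_ideal {f. \<forall>d. hom_comp d f \<in> G}"
  unfolding is_ideal_def
proof (intro conjI ballI allI)
  fix f g h assume f: "f \<in> {f. \<forall>d. hom_comp d f \<in> G}" and g: "g \<in> {f. \<forall>d. hom_comp d f \<in> G}"
  then show "f + g \<in> {f. \<forall>d. hom_comp d f \<in> G}" using ideal_add_mem[OF G] by (simp add: hom_comp_add)
  have "h * f = (\<Sum>i\<le>tdeg h. hom_comp i h * f)"
    by (simp add: sum_hom_comp sum_distrib_right[symmetric])
  moreover have "hom_comp d (hom_comp i h * f) \<in> G" for d i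
    using f ideal_mult_left_mem[OF G] ideal_zero_mem[OF G]
    by (simp add: hom_comp_homog_mult[OF homog_hom_comp])
  ultimately show "h * f \<in> {f. \<forall>d. hom_comp d f \<in> G}"
    by (simp add: hom_comp_sum ideal_sum_mem[OF G])
qed (simp add: ideal_zero_mem[OF G])

lemma hom_closed_ideal_genI:
  assumes "is_ideal J" "J = ideal_gen H" "\<And>h d. h \<in> H \<Longrightarrow> hom_comp d h \<in> J"
  shows "hom_closed J"
proof -
  have "ideal_gen H \<subseteq> {f. \<forall>d. hom_comp d f \<in> J}"
    by (rule ideal_gen_minimal[OF is_ideal_hom_closed_part[OF assms(1)]]) (use assms(3) in blast)
  then show ?thesis using assms(2) unfolding hom_closed_def by blast
qed

lemma graded_ideal_hom_closed:
  assumes "graded_ideal I"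
  shows "hom_closed I"
proof -
  have I: "is_ideal I" "I = ideal_gen {f \<in> I. \<exists>d. homog d f}"
    using assms unfolding graded_ideal_def by blast+
  show ?thesis
    by (rule hom_closed_ideal_genI[OF I]) (auto simp: hom_comp_homog ideal_zero_mem[OF I(1)])
qed

lemma hom_closed_ideal_pow: "hom_closed I \<Longrightarrow> hom_closed (ideal_pow I k)"
proof (induction k)
  case 0
  then show ?case by (simp add: hom_closed_def)
next
  case (Suc k)
  let ?P = "{f * g |f g. f \<in> I \<and> g \<in> ideal_pow I k}"
  have J: "is_ideal (ideal_gen ?P)" by (rule is_ideal_ideal_gen)
  have "hom_comp i f * hom_comp j g \<in> ideal_gen ?P" if "f \<in> I" "g \<in> ideal_pow I k" for f g i j
    using that Suc ideal_gen_superset[of ?P] unfolding hom_closed_def by blast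
  then have "hom_comp d (f * g) \<in> ideal_gen ?P" if "f \<in> I" "g \<in> ideal_pow I k" for f g d
    using that unfolding hom_comp_mult[OF order.refl order.refl]
    by (auto intro!: ideal_sum_mem[OF J] simp: ideal_zero_mem[OF J])
  then show ?case
    by (simp, intro hom_closed_ideal_genI[OF J refl]) blast
qed

lemma hom_closed_colon:
  assumes "hom_closed J" "homog e r"
  shows "hom_closed (colon J r)"
  unfolding hom_closed_def colon_def
proof (intro ballI allI, simp)
  fix x d assume "x * r \<in> J"
  then have "hom_comp (d + e) (r * x) \<in> J" using assms(1) unfolding hom_closed_def by (simp add: mult.commute)
  then show "hom_comp d x * r \<in> J" by (simp add: hom_comp_homog_mult[OF assms(2)] mult.commute)
qed

section \<open>Homogeneous associated primes\<close>

lemma least_hom_comp_not_mem: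
  assumes Q: "is_ideal Q" and "a \<notin> Q"
  obtains i0 where "hom_comp i0 a \<notin> Q" "i0 \<le> tdeg a" "\<And>i. i < i0 \<Longrightarrow> hom_comp i a \<in> Q"
proof -
  have "\<exists>i. hom_comp i a \<notin> Q"
    using assms ideal_sum_mem[OF Q, of "{..tdeg a}" "\<lambda>d. hom_comp d a"] by (auto simp: sum_hom_comp)
  then obtain i0 where i0: "hom_comp i0 a \<notin> Q" "\<And>i. i < i0 \<Longrightarrow> hom_comp i a \<in> Q"
    unfolding exists_least_iff[of "\<lambda>i. hom_comp i a \<notin> Q"] by blast
  moreover have "i0 \<le> tdeg a"
    using i0(1) hom_comp_eq_0_if_tdeg_less[of a i0] ideal_zero_mem[OF Q] by (metis not_le)
  ultimately show thesis using that by blast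
qed

text \<open>Modulo \<open>Q\<close>, the product of the lowest components of \<open>a\<close> and \<open>b\<close> outside \<open>Q\<close> is a
  homogeneous component of \<open>a * b\<close>.\<close>

lemma prime_ideal_if_homog_prime:
  fixes Q :: "('v::finite, 'k::field) mpoly set"
  assumes Q: "is_ideal Q" "hom_closed Q" "Q \<noteq> UNIV"
    and homog_prime: "\<And>a b d e. homog d a \<Longrightarrow> homog e b \<Longrightarrow> a * b \<in> Q \<Longrightarrow> a \<in> Q \<or> b \<in> Q"
  shows "prime_ideal Q"
  unfolding prime_ideal_def
proof (intro conjI allI impI Q(1) Q(3))
  fix a b assume ab: "a * b \<in> Q"
  show "a \<in> Q \<or> b \<in> Q"
  proof (rule ccontr)
    assume "\<not> (a \<in> Q \<or> b \<in> Q)"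
    then have "a \<notin> Q" "b \<notin> Q" by auto
    obtain i0 where a: "hom_comp i0 a \<notin> Q" "i0 \<le> tdeg a" "\<And>i. i < i0 \<Longrightarrow> hom_comp i a \<in> Q"
      using least_hom_comp_not_mem[OF Q(1) \<open>a \<notin> Q\<close>] by blast
    obtain j0 where b: "hom_comp j0 b \<notin> Q" "j0 \<le> tdeg b" "\<And>j. j < j0 \<Longrightarrow> hom_comp j b \<in> Q"
      using least_hom_comp_not_mem[OF Q(1) \<open>b \<notin> Q\<close>] by blast
    let ?X = "hom_comp i0 a * hom_comp j0 b"
    define R where "R = (\<Sum>i\<le>tdeg a. \<Sum>j\<le>tdeg b.
      if i + j = i0 + j0 \<and> (i, j) \<noteq> (i0, j0) then hom_comp i a * hom_comp j b else 0)"
    have "(if i + j = i0 + j0 then hom_comp i a * hom_comp j b else 0) =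
        (if i + j = i0 + j0 \<and> (i, j) \<noteq> (i0, j0) then hom_comp i a * hom_comp j b else 0) +
        (if i = i0 then if j = j0 then ?X else 0 else 0)" for i j
      by auto
    moreover have "(\<Sum>i\<le>tdeg a. \<Sum>j\<le>tdeg b. if i = i0 then if j = j0 then ?X else 0 else 0) = ?X"
    proof -
      have "(\<Sum>i\<le>tdeg a. \<Sum>j\<le>tdeg b. if i = i0 then if j = j0 then ?X else 0 else 0) =
          (\<Sum>i\<le>tdeg a. if i = i0 then ?X else 0)"
        using b(2) by (intro sum.cong) auto
      then show ?thesis using a(2) by simp
    qed
    ultimately have "hom_comp (i0 + j0) (a * b) = R + ?X"
      by (simp add: hom_comp_mult[OF order.refl order.refl] R_def sum.distrib)
    moreover have "hom_comp (i0 + j0) (a * b) \<in> Q"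
      using Q(2) ab unfolding hom_closed_def by blast
    moreover have "R \<in> Q"
      unfolding R_def
    proof (intro ideal_sum_mem[OF Q(1)])
      fix i j
      have "i < i0 \<or> j < j0" if "i + j = i0 + j0" "(i, j) \<noteq> (i0, j0)"
        using that by auto
      then show "(if i + j = i0 + j0 \<and> (i, j) \<noteq> (i0, j0) then hom_comp i a * hom_comp j b else 0) \<in> Q"
        using a(3) b(3) ideal_mult_left_mem[OF Q(1)] ideal_mult_right_mem[OF Q(1)] ideal_zero_mem[OF Q(1)]
        by auto
    qed
    ultimately have "?X \<in> Q" using ideal_diff_mem[OF Q(1), of _ R] by (metis add_diff_cancel_left')
    then show False using homog_prime[OF homog_hom_comp homog_hom_comp] a(1) b(1) by blast
  qed
qed

text \<open>A maximal member of \<open>{J : r | r homogeneous, r \<notin> J}\<close> is prime.\<close>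

lemma ex_homog_Ass:
  fixes J :: "('v::finite, 'k::field) mpoly set"
  assumes J: "is_ideal J" "hom_closed J" "J \<noteq> UNIV"
  shows "\<exists>e r. homog e r \<and> colon J r \<in> Ass J"
proof -
  define F where "F = {colon J r | r. (\<exists>e. homog e r) \<and> r \<notin> J}"
  have "1 \<notin> J" using J(1,3) ideal_eq_UNIV_iff_one_mem by blast
  then have "colon J 1 \<in> F" unfolding F_def using homog_one by blast
  moreover have "\<And>Q. Q \<in> F \<Longrightarrow> is_ideal Q" unfolding F_def using is_ideal_colon[OF J(1)] by blast
  ultimately obtain Q where "Q \<in> F" and max: "\<And>Q'. Q' \<in> F \<Longrightarrow> Q \<subseteq> Q' \<Longrightarrow> Q' = Q"
    using ideal_family_has_maximal[of "colon J 1" F] by blast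
  then obtain r e where r: "Q = colon J r" "homog e r" "r \<notin> J" unfolding F_def by blast
  have "prime_ideal Q"
  proof (rule prime_ideal_if_homog_prime)
    show "is_ideal Q" using r is_ideal_colon[OF J(1)] by simp
    show "hom_closed Q" using r hom_closed_colon[OF J(2)] by simp
    have "1 \<notin> Q" using r(1,3) unfolding colon_def by simp
    then show "Q \<noteq> UNIV" by blast
    fix a b d e' assume a: "homog d a" and "homog e' b" and ab: "a * b \<in> Q"
    show "a \<in> Q \<or> b \<in> Q"
    proof (cases "a \<in> Q")
      case False
      then have "r * a \<notin> J" using r(1) unfolding colon_def by (simp add: mult.commute)
      then have "colon J (r * a) \<in> F" unfolding F_def using homog_mult[OF r(2) a] by blast
      moreover have "Q \<subseteq> colon J (r * a)"
        using ideal_subset_colon[OF is_ideal_colon[OF J(1)]] by (simp add: r(1) colon_colon)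
      ultimately have "colon J (r * a) = Q" using max by blast
      moreover have "b \<in> colon J (r * a)" using ab r(1) unfolding colon_def by (simp add: ac_simps)
      ultimately show ?thesis by simp
    qed simp
  qed
  then show ?thesis using r unfolding Ass_def by blast
qed

section \<open>Degree bounds for the v-numbers of powers\<close>

lemma is_ideal_mdeg_ge: "is_ideal {h :: ('v::finite, 'k::field) mpoly. \<forall>m\<in>keys h. c \<le> mdeg m}"
  unfolding is_ideal_def
proof (intro conjI ballI allI; clarsimp)
  fix f g m assume "\<forall>m\<in>keys f. c \<le> mdeg m" "\<forall>m\<in>keys g. c \<le> mdeg m" "m \<in> keys (f + g)"
  then show "c \<le> mdeg m" using keys_add[of f g] by auto
next
  fix f h m assume "\<forall>m\<in>keys f. c \<le> mdeg m" "m \<in> keys (h * f)"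
  then show "c \<le> mdeg m" using keys_mult[of h f] by (force simp: mdeg_add)
qed

lemma graded_ideal_mdeg_ge_init_deg:
  assumes "graded_ideal I" "f \<in> I" "m \<in> keys f"
  shows "init_deg I \<le> mdeg m"
proof -
  have "init_deg I \<le> mdeg m" if "h \<in> I" "homog d h" "m \<in> keys h" for h d m
  proof -
    have "h \<noteq> 0" using that(3) by auto
    then have "init_deg I \<le> d"
      unfolding init_deg_def by (intro Least_le) (use that in blast)
    moreover have "mdeg m = d" using that(2,3) unfolding homog_def by blast
    ultimately show ?thesis by simp
  qed
  then have "ideal_gen {f \<in> I. \<exists>d. homog d f} \<subseteq> {h. \<forall>m\<in>keys h. init_deg I \<le> mdeg m}"
    by (intro ideal_gen_minimal is_ideal_mdeg_ge) blast
  with assms show ?thesis unfolding graded_ideal_def by blast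
qed

lemma ideal_pow_mdeg_ge:
  assumes "graded_ideal I" "f \<in> ideal_pow I k" "m \<in> keys f"
  shows "k * init_deg I \<le> mdeg m"
  using assms(2,3)
proof (induction k arbitrary: f m)
  case (Suc k)
  have "{f * g |f g. f \<in> I \<and> g \<in> ideal_pow I k} \<subseteq> {h. \<forall>m\<in>keys h. Suc k * init_deg I \<le> mdeg m}"
  proof clarify
    fix f g m assume fg: "f \<in> I" "g \<in> ideal_pow I k" "m \<in> keys (f * g)"
    then obtain a b where "m = a + b" "a \<in> keys f" "b \<in> keys g" using keys_mult by blast
    then show "Suc k * init_deg I \<le> mdeg m"
      using graded_ideal_mdeg_ge_init_deg[OF assms(1) fg(1)] Suc.IH[OF fg(2)]
      by (auto intro!: add_mono simp: mdeg_add)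
  qed
  then have "ideal_pow I (Suc k) \<subseteq> {h. \<forall>m\<in>keys h. Suc k * init_deg I \<le> mdeg m}"
    by (simp add: ideal_gen_minimal[OF is_ideal_mdeg_ge])
  with Suc.prems show ?case by blast
qed simp

lemma homog_mem_ideal_pow_deg_ge:
  assumes "graded_ideal I" "f \<in> ideal_pow I k" "f \<noteq> 0" "homog d f"
  shows "k * init_deg I \<le> d"
  using ideal_pow_mdeg_ge[OF assms(1,2) lead_mon_in_keys[OF assms(3)]] lead_mon_in_keys[OF assms(3)] assms(4)
  unfolding homog_def by auto

lemma ex_homog_init_deg:
  assumes "graded_ideal I" "I \<noteq> {0}"
  shows "\<exists>g\<in>I. g \<noteq> 0 \<and> homog (init_deg I) g"
proof -
  have "\<exists>d. \<exists>g\<in>I. g \<noteq> 0 \<and> homog d g"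
  proof (rule ccontr)
    assume "\<not> ?thesis"
    then have "ideal_gen {f \<in> I. \<exists>d. homog d f} \<subseteq> {0}"
      by (intro ideal_gen_minimal is_ideal_zero) blast
    then show False using assms ideal_zero_mem unfolding graded_ideal_def by blast
  qed
  then show ?thesis unfolding init_deg_def by (rule LeastI_ex)
qed

lemma init_deg_pos:
  assumes "graded_ideal I" "I \<noteq> {0}" "I \<noteq> UNIV"
  shows "0 < init_deg I"
proof (rule ccontr)
  assume "\<not> 0 < init_deg I"
  then obtain g where g: "g \<in> I" "g \<noteq> 0" "homog 0 g" using ex_homog_init_deg[OF assms(1,2)] by auto
  define c where "c = lookup g 0"
  have g_const: "g = Poly_Mapping.single 0 c" using homog_0_eq_const[OF g(3)] by (simp add: c_def)
  with g(2) have "c \<noteq> 0" by auto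
  with g_const have "Poly_Mapping.single 0 (1 / c) * g = 1" by (simp add: mult_single)
  moreover have I: "is_ideal I" using assms(1) unfolding graded_ideal_def by blast
  ultimately have "1 \<in> I" using ideal_mult_left_mem[OF I g(1)] by metis
  then show False using ideal_eq_UNIV_iff_one_mem[OF I] assms(3) by blast
qed

lemma ideal_pow_neq_UNIV:
  assumes "graded_ideal I" "I \<noteq> {0}" "I \<noteq> UNIV" "0 < k"
  shows "ideal_pow I k \<noteq> UNIV"
proof
  assume "ideal_pow I k = UNIV"
  then have "k * init_deg I \<le> 0"
    by (intro homog_mem_ideal_pow_deg_ge[OF assms(1) _ one_neq_zero homog_one]) simp
  then show False using init_deg_pos[OF assms(1-3)] assms(4) by simp
qed

lemma v_number_ideal_pow_ge:
  assumes I: "graded_ideal I" "I \<noteq> {0}" "I \<noteq> UNIV" and "0 < k"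
  shows "(k - 1) * init_deg I \<le> v_number (ideal_pow I k)"
proof -
  let ?J = "ideal_pow I k"
  have J: "is_ideal ?J" "hom_closed ?J" "?J \<noteq> UNIV"
    using is_ideal_ideal_pow hom_closed_ideal_pow[OF graded_ideal_hom_closed[OF I(1)]]
      ideal_pow_neq_UNIV[OF I \<open>0 < k\<close>] by blast+
  obtain e r where "homog e r" "colon ?J r \<in> Ass ?J" using ex_homog_Ass[OF J] by blast
  then obtain f where f: "homog (v_number ?J) f" "colon ?J f \<in> Ass ?J" using v_number_attained by blast
  then have prime: "prime_ideal (colon ?J f)" unfolding Ass_def by blast
  then have "f \<noteq> 0" using colon_zero[OF J(1)] unfolding prime_ideal_def by auto
  obtain g where g: "g \<in> I" "g \<noteq> 0" "homog (init_deg I) g" using ex_homog_init_deg[OF I(1,2)] by blast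
  have "g ^ k \<in> colon ?J f" using power_mem_ideal_pow[OF g(1)] ideal_subset_colon[OF J(1)] by blast
  then have "g \<in> colon ?J f" by (rule prime_ideal_power_mem[OF prime])
  then have "g * f \<in> ?J" unfolding colon_def by simp
  then have "k * init_deg I \<le> init_deg I + v_number ?J"
    by (rule homog_mem_ideal_pow_deg_ge[OF I(1) _ mult_nonzero[OF g(2) \<open>f \<noteq> 0\<close>] homog_mult[OF g(3) f(1)]])
  then show ?thesis by (simp add: diff_mult_distrib)
qed

lemma v_number_ideal_pow_le:
  assumes I: "graded_ideal I" "I \<noteq> {0}" "I \<noteq> UNIV"
  shows "\<exists>e N. \<forall>n\<ge>N. v_number (ideal_pow I (Suc n)) \<le> n * init_deg I + e"
proof -
  obtain g where g: "g \<in> I" "g \<noteq> 0" "homog (init_deg I) g" using ex_homog_init_deg[OF I(1,2)] by blast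
  define C where "C n = colon (ideal_pow I (Suc n)) (g ^ n)" for n
  have C_ideal: "is_ideal (C n)" for n
    unfolding C_def by (rule is_ideal_colon[OF is_ideal_ideal_pow])
  have C_inc: "C n \<subseteq> C (Suc n)" for n
  proof
    fix x assume "x \<in> C n"
    then have "g * (x * g ^ n) \<in> ideal_pow I (Suc (Suc n))"
      unfolding C_def colon_def using mult_mem_ideal_pow[OF g(1)] by blast
    moreover have "x * g ^ Suc n = g * (x * g ^ n)" by (simp add: ac_simps)
    ultimately show "x \<in> C (Suc n)" by (simp only: C_def colon_def mem_Collect_eq)
  qed
  obtain N where N: "\<forall>n\<ge>N. C n = C N" using ideal_chain_stabilizes[of C, OF C_ideal C_inc] by blast
  have "hom_closed (C N)" unfolding C_def
    by (rule hom_closed_colon[OF hom_closed_ideal_pow[OF graded_ideal_hom_closed[OF I(1)]] homog_power[OF g(3)]])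
  moreover have "C N \<noteq> UNIV"
  proof
    assume "C N = UNIV"
    then have "1 \<in> C N" by simp
    then have "g ^ N \<in> ideal_pow I (Suc N)" by (simp only: C_def colon_def mem_Collect_eq mult_1)
    then show False
      using homog_mem_ideal_pow_deg_ge[OF I(1) _ power_nonzero[OF g(2)] homog_power[OF g(3)]]
        init_deg_pos[OF I] by fastforce
  qed
  ultimately obtain e r where r: "homog e r" "colon (C N) r \<in> Ass (C N)"
    using ex_homog_Ass C_ideal by blast
  have "v_number (ideal_pow I (Suc n)) \<le> n * init_deg I + e" if "N \<le> n" for n
  proof (rule v_number_le)
    show "homog (n * init_deg I + e) (g ^ n * r)" by (rule homog_mult[OF homog_power[OF g(3)] r(1)])
    have "colon (ideal_pow I (Suc n)) (g ^ n * r) = colon (C n) r"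
      by (simp only: C_def colon_colon)
    also have "\<dots> = colon (C N) r" using N that by metis
    finally have eq: "colon (ideal_pow I (Suc n)) (g ^ n * r) = colon (C N) r" .
    have "prime_ideal (colon (C N) r)" using r(2) unfolding Ass_def by blast
    with eq show "colon (ideal_pow I (Suc n)) (g ^ n * r) \<in> Ass (ideal_pow I (Suc n))"
      unfolding Ass_def by (intro CollectI conjI exI[of _ "g ^ n * r"]) simp_all
  qed
  then show ?thesis by blast
qed

lemma LIMSEQ_div_of_affine_bounds:
  fixes u :: "nat \<Rightarrow> real"
  assumes "eventually (\<lambda>k. a * real k - c \<le> u k \<and> u k \<le> a * real k + c) sequentially"
  shows "(\<lambda>k. u k / real k) \<longlonglongrightarrow> a"
proof (rule tendsto_sandwich)
  have bounds: "eventually (\<lambda>k. 0 < k \<and> a * real k - c \<le> u k \<and> u k \<le> a * real k + c) sequentially"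
    using assms eventually_gt_at_top[of 0] by eventually_elim simp
  show "eventually (\<lambda>k. a - c / real k \<le> u k / real k) sequentially"
    using bounds
  proof eventually_elim
    case (elim k)
    then have "(a * real k - c) / real k \<le> u k / real k" by (intro divide_right_mono) auto
    with elim show ?case by (simp add: diff_divide_distrib)
  qed
  show "eventually (\<lambda>k. u k / real k \<le> a + c / real k) sequentially"
    using bounds
  proof eventually_elim
    case (elim k)
    then have "u k / real k \<le> (a * real k + c) / real k" by (intro divide_right_mono) auto
    with elim show ?case by (simp add: add_divide_distrib)
  qed
  show "(\<lambda>k. a - c / real k) \<longlonglongrightarrow> a" "(\<lambda>k. a + c / real k) \<longlonglongrightarrow> a"
    using tendsto_diff[OF tendsto_const lim_const_over_n[of c]]
      tendsto_add[OF tendsto_const lim_const_over_n[of c]] by simp_all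
qed

theorem theorem4p1:
  fixes I :: "('v::finite, 'k::field) mpoly set"
  assumes "graded_ideal I" and "I \<noteq> {0}" and "I \<noteq> UNIV"
  shows "(\<lambda>k. real (v_number (ideal_pow I k)) / real k) \<longlonglongrightarrow> real (init_deg I)"
proof -
  let ?a = "init_deg I" and ?v = "\<lambda>k. v_number (ideal_pow I k)"
  obtain e N where up: "\<And>n. N \<le> n \<Longrightarrow> ?v (Suc n) \<le> n * ?a + e"
    using v_number_ideal_pow_le[OF assms] by blast
  have "real ?a * real k - real (?a + e) \<le> real (?v k) \<and> real (?v k) \<le> real ?a * real k + real (?a + e)"
    if kN: "Suc N \<le> k" for k
  proof -
    obtain n where k: "k = Suc n" using kN by (cases k) auto
    with kN have "N \<le> n" by simp
    with k have "n * ?a \<le> ?v k" "?v k \<le> n * ?a + e"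
      using v_number_ideal_pow_ge[OF assms, of k] up by simp_all
    then have "real n * real ?a \<le> real (?v k)" "real (?v k) \<le> real n * real ?a + real e"
      by (metis of_nat_le_iff of_nat_mult, metis of_nat_le_iff of_nat_mult of_nat_add)
    moreover have "real ?a * real k = real n * real ?a + real ?a" by (simp add: k algebra_simps)
    ultimately show ?thesis by simp
  qed
  then have "eventually (\<lambda>k. real ?a * real k - real (?a + e) \<le> real (?v k) \<and>
      real (?v k) \<le> real ?a * real k + real (?a + e)) sequentially"
    unfolding eventually_sequentially by blast
  then show ?thesis by (rule LIMSEQ_div_of_affine_bounds)
qed

end
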